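(* In the full-information online setting for length-$\ell$ menus of lotteries over $m$ items with an arbitrary sequence of buyer valuations, running the weighted-majority algorithm (choose expert $k$ with probability proportional to $(1+\beta)^{\mathrm{Rev}_k/(mH)}$, $\mathrm{Rev}_k$ its cumulative revenue so far) over the finite set $\mathcal X$ of length-$\ell$ menus whose allocation probabilities lie in $\{0\}\cup\{(1-\alpha)^s: s\in\mathbb Z_{\ge0},(1-\alpha)^s\ge\alpha/(Hm)\}$ and whose prices are integer multiples of $\alpha$ in $[0,mH]$, with $\alpha=T^{-1}$, $\beta=T^{-1/2}$ (the discretization corresponding to $K=T^{1/2}$, $\delta=T^{-1/2}$), has regret $\tilde O(m^2H\ell\sqrt T)$.
   Context: A length-$\ell$ menu of lotteries over $m$ items consists of entries $(\vec\phi^{(j)},p^{(j)})$, $j=1,\dots,\ell$, with $\vec\phi^{(j)}\in[0,1]^m$ and $p^{(j)}\in[0,mH]$, plus the null entry $(\vec0,0)$. A buyer with item values $v(\vec e_i)\in[0,H]$ (additive or unit-demand; for unit-demand $\sum_i\phi^{(j)}[i]\le1$) selects an entry maximizing $\sum_i v(\vec e_i)\phi^{(j)}[i]-p^{(j)}$ and pays its price (the revenue $u_t$). In full information the learner observes $u_t$ on all menus after each round. Regret is $\mathbb E[\max_{\vec\rho}\sum_t u_t(\vec\rho)-\sum_t u_t(\vec\rho_t)]$ over all length-$\ell$ menus. *)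

theory Defs
  imports Complex_Main
begin

text \<open>A length-l menu over m items: entries j < l, allocation phi j i (item i < m)
  and price p j.  The null entry (0,0) is implicit.  Values outside the index
  ranges are forced to 0 so that menus have a canonical representation.\<close>

type_synonym menu = "(nat \<Rightarrow> nat \<Rightarrow> real) \<times> (nat \<Rightarrow> real)"

definition valid_menu :: "bool \<Rightarrow> nat \<Rightarrow> nat \<Rightarrow> real \<Rightarrow> menu \<Rightarrow> bool" where
  "valid_menu ud m l H M \<longleftrightarrow>
     (\<forall>j i. (j < l \<and> i < m \<longrightarrow> 0 \<le> fst M j i \<and> fst M j i \<le> 1)
          \<and> (\<not> (j < l \<and> i < m) \<longrightarrow> fst M j i = 0))
   \<and> (\<forall>j. (j < l \<longrightarrow> 0 \<le> snd M j \<and> snd M j \<le> real m * H) \<and> (l \<le> j \<longrightarrow> snd M j = 0))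
   \<and> (ud \<longrightarrow> (\<forall>j<l. (\<Sum>i<m. fst M j i) \<le> 1))"

definition entry_util :: "nat \<Rightarrow> (nat \<Rightarrow> real) \<Rightarrow> menu \<Rightarrow> nat \<Rightarrow> real" where
  "entry_util m v M j = (\<Sum>i<m. v i * fst M j i) - snd M j"

text \<open>Revenue: the buyer picks a utility-maximizing entry (null entry has utility 0
  and price 0); ties are broken in favour of the highest price.\<close>
definition revenue :: "nat \<Rightarrow> nat \<Rightarrow> (nat \<Rightarrow> real) \<Rightarrow> menu \<Rightarrow> real" where
  "revenue m l v M =
     (let best = Max (insert 0 (entry_util m v M ` {..<l}));
          C = {j \<in> {..<l}. entry_util m v M j = best}
      in if C = {} then 0 else Max (snd M ` C))"

definition alloc_grid :: "nat \<Rightarrow> real \<Rightarrow> real \<Rightarrow> real set" where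
  "alloc_grid m H \<alpha> = {0} \<union> {(1 - \<alpha>) ^ s | s. (1 - \<alpha>) ^ s \<ge> \<alpha> / (H * real m)}"

definition price_grid :: "nat \<Rightarrow> real \<Rightarrow> real \<Rightarrow> real set" where
  "price_grid m H \<alpha> = {real k * \<alpha> | k. real k * \<alpha> \<le> real m * H}"

definition disc_menus :: "bool \<Rightarrow> nat \<Rightarrow> nat \<Rightarrow> real \<Rightarrow> real \<Rightarrow> menu set" where
  "disc_menus ud m l H \<alpha> =
     {M. valid_menu ud m l H M
       \<and> (\<forall>j<l. \<forall>i<m. fst M j i \<in> alloc_grid m H \<alpha>)
       \<and> (\<forall>j<l. snd M j \<in> price_grid m H \<alpha>)}"

definition cum_rev :: "nat \<Rightarrow> nat \<Rightarrow> (nat \<Rightarrow> nat \<Rightarrow> real) \<Rightarrow> nat \<Rightarrow> menu \<Rightarrow> real" where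
  "cum_rev m l vs t M = (\<Sum>s<t. revenue m l (vs s) M)"

definition wm_weight :: "nat \<Rightarrow> nat \<Rightarrow> real \<Rightarrow> real \<Rightarrow> (nat \<Rightarrow> nat \<Rightarrow> real) \<Rightarrow> nat \<Rightarrow> menu \<Rightarrow> real" where
  "wm_weight m l H \<beta> vs t M = (1 + \<beta>) powr (cum_rev m l vs t M / (real m * H))"

definition wm_prob :: "menu set \<Rightarrow> nat \<Rightarrow> nat \<Rightarrow> real \<Rightarrow> real \<Rightarrow> (nat \<Rightarrow> nat \<Rightarrow> real) \<Rightarrow> nat \<Rightarrow> menu \<Rightarrow> real" where
  "wm_prob X m l H \<beta> vs t M =
     wm_weight m l H \<beta> vs t M / (\<Sum>M'\<in>X. wm_weight m l H \<beta> vs t M')"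

definition wm_expected_revenue ::
  "menu set \<Rightarrow> nat \<Rightarrow> nat \<Rightarrow> real \<Rightarrow> real \<Rightarrow> (nat \<Rightarrow> nat \<Rightarrow> real) \<Rightarrow> nat \<Rightarrow> real" where
  "wm_expected_revenue X m l H \<beta> vs T =
     (\<Sum>t<T. \<Sum>M\<in>X. wm_prob X m l H \<beta> vs t M * revenue m l (vs t) M)"

definition opt_revenue :: "bool \<Rightarrow> nat \<Rightarrow> nat \<Rightarrow> real \<Rightarrow> (nat \<Rightarrow> nat \<Rightarrow> real) \<Rightarrow> nat \<Rightarrow> real" where
  "opt_revenue ud m l H vs T =
     (SUP M \<in> {M. valid_menu ud m l H M}. \<Sum>t<T. revenue m l (vs t) M)"

definition wm_regret :: "bool \<Rightarrow> nat \<Rightarrow> nat \<Rightarrow> real \<Rightarrow> (nat \<Rightarrow> nat \<Rightarrow> real) \<Rightarrow> nat \<Rightarrow> real" where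
  "wm_regret ud m l H vs T =
     (let \<alpha> = 1 / real T; \<beta> = 1 / sqrt (real T)
      in opt_revenue ud m l H vs T
         - wm_expected_revenue (disc_menus ud m l H \<alpha>) m l H \<beta> vs T)"

end

theory Submission
  imports Defs "HOL-Analysis.Convex"
begin

text \<open>Weighted majority over a finite expert class X, run on the revenues scaled into [0,1],
  loses at most m H (\<beta> T + ln |X| / \<beta>) against the best menu of X. The class X of grid menus is
  almost as good as the class of all menus: rounding allocations down to the geometric grid and
  prices down to (1 - \<delta>) times their value (then to the \<alpha>-grid) costs at most 5 m H / sqrt T per
  round, because the price discount makes the buyer switch only to entries that are not much
  cheaper. Finally |X| \<le> (3 (m H l T)^2)^(2 m l), so with \<beta> = 1 / sqrt T the regret is
  O(m^2 H l sqrt T log(m H l T)).\<close>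

lemma powr_le_one_plus_mult:
  fixes b x :: real
  assumes "0 \<le> b" "0 \<le> x" "x \<le> 1"
  shows "(1 + b) powr x \<le> 1 + b * x"
proof -
  have "exp ((1 - x) *\<^sub>R 0 + x *\<^sub>R ln (1 + b)) \<le> (1 - x) * exp 0 + x * exp (ln (1 + b))"
    by (rule convex_onD[OF exp_convex]) (use assms in auto)
  moreover have "(1 + b) powr x = exp ((1 - x) *\<^sub>R 0 + x *\<^sub>R ln (1 + b))"
    using assms by (simp add: powr_def mult.commute)
  ultimately show ?thesis
    using assms by (simp add: algebra_simps)
qed

lemma sum_mult_powr_le_exp:
  fixes w g :: "'a \<Rightarrow> real" and b :: real
  assumes fin: "finite X" and w: "\<And>M. M \<in> X \<Longrightarrow> 0 \<le> w M"
    and g: "\<And>M. M \<in> X \<Longrightarrow> 0 \<le> g M \<and> g M \<le> 1" and b: "0 \<le> b"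
    and W: "0 < (\<Sum>M\<in>X. w M)"
  shows "(\<Sum>M\<in>X. w M * (1 + b) powr g M)
           \<le> (\<Sum>M\<in>X. w M) * exp (b * (\<Sum>M\<in>X. w M / (\<Sum>M'\<in>X. w M') * g M))"
proof -
  define W where "W = (\<Sum>M\<in>X. w M)"
  have "(\<Sum>M\<in>X. w M * (1 + b) powr g M) \<le> (\<Sum>M\<in>X. w M * (1 + b * g M))"
    by (intro sum_mono mult_left_mono powr_le_one_plus_mult) (use b g w in auto)
  also have "\<dots> = W * (1 + b * (\<Sum>M\<in>X. w M / W * g M))"
  proof -
    have "W * (\<Sum>M\<in>X. w M / W * g M) = (\<Sum>M\<in>X. w M * g M)"
      using W unfolding sum_distrib_left W_def by (intro sum.cong) auto
    moreover have "(\<Sum>M\<in>X. w M * (1 + b * g M)) = W + b * (\<Sum>M\<in>X. w M * g M)"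
      by (simp add: W_def distrib_left sum.distrib sum_distrib_left mult.left_commute)
    ultimately show ?thesis
      by (simp add: distrib_left mult.left_commute)
  qed
  also have "\<dots> \<le> W * exp (b * (\<Sum>M\<in>X. w M / W * g M))"
    using W by (intro mult_left_mono) (auto simp: W_def)
  finally show ?thesis unfolding W_def .
qed

lemma weighted_majority_potential_le:
  fixes X :: "'a set" and g :: "nat \<Rightarrow> 'a \<Rightarrow> real" and b :: real
  assumes fin: "finite X" and nonempty: "X \<noteq> {}"
    and g: "\<And>t M. t < T \<Longrightarrow> M \<in> X \<Longrightarrow> 0 \<le> g t M \<and> g t M \<le> 1" and b: "0 \<le> b"
    and t: "t \<le> T"
  defines "w \<equiv> \<lambda>t M. (1 + b) powr (\<Sum>s<t. g s M)"
  shows "(\<Sum>M\<in>X. w t M) \<le> card X * exp (b * (\<Sum>s<t. \<Sum>M\<in>X. w s M / (\<Sum>M'\<in>X. w s M') * g s M))"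
  using t
proof (induction t)
  case 0
  show ?case by (simp add: w_def)
next
  case (Suc t)
  define W where "W = (\<Sum>M\<in>X. w t M)"
  define E where "E = (\<Sum>M\<in>X. w t M / W * g t M)"
  have w_pos: "0 < w t M" for M
    using b unfolding w_def by simp
  have "0 < W"
    unfolding W_def using fin nonempty w_pos by (intro sum_pos) auto
  have "(\<Sum>M\<in>X. w (Suc t) M) = (\<Sum>M\<in>X. w t M * (1 + b) powr g t M)"
    unfolding w_def using b by (simp add: powr_add)
  also have "\<dots> \<le> W * exp (b * E)"
    unfolding W_def E_def
    by (rule sum_mult_powr_le_exp) (use fin g Suc.prems b w_pos \<open>0 < W\<close> in \<open>auto simp: W_def less_imp_le\<close>)
  also have "\<dots> \<le> card X * exp (b * (\<Sum>s<t. \<Sum>M\<in>X. w s M / (\<Sum>M'\<in>X. w s M') * g s M)) * exp (b * E)"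
    using Suc unfolding W_def by (intro mult_right_mono) auto
  finally show ?case
    unfolding E_def W_def by (simp add: algebra_simps exp_add)
qed

lemma weighted_majority_regret:
  fixes X :: "'a set" and g :: "nat \<Rightarrow> 'a \<Rightarrow> real" and b :: real
  assumes fin: "finite X" and M0: "M0 \<in> X"
    and g: "\<And>t M. t < T \<Longrightarrow> M \<in> X \<Longrightarrow> 0 \<le> g t M \<and> g t M \<le> 1"
    and b: "0 < b" "b \<le> 1"
  defines "w \<equiv> \<lambda>t M. (1 + b) powr (\<Sum>s<t. g s M)"
  shows "(\<Sum>t<T. g t M0)
           \<le> (\<Sum>t<T. \<Sum>M\<in>X. w t M / (\<Sum>M'\<in>X. w t M') * g t M) + b * T + ln (card X) / b"
proof -
  define E where "E = (\<Sum>t<T. \<Sum>M\<in>X. w t M / (\<Sum>M'\<in>X. w t M') * g t M)"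
  define G where "G = (\<Sum>t<T. g t M0)"
  have card_pos: "0 < card X"
    using fin M0 card_gt_0_iff by blast
  have G: "0 \<le> G" "G \<le> T"
    unfolding G_def using g M0 sum_mono[of "{..<T}" "\<lambda>t. g t M0" "\<lambda>_. 1"]
    by (auto intro: sum_nonneg)
  have "w T M0 \<le> (\<Sum>M\<in>X. w T M)"
    unfolding w_def using fin M0 by (intro member_le_sum) auto
  also have "\<dots> \<le> card X * exp (b * E)"
    unfolding E_def w_def
    by (rule weighted_majority_potential_le[where X = X and g = g and b = b and T = T and t = T])
      (use fin M0 g b in auto)
  finally have "ln (w T M0) \<le> ln (card X * exp (b * E))"
    using b card_pos by (subst ln_le_cancel_iff) (auto simp: w_def)
  hence "G * ln (1 + b) \<le> ln (card X) + b * E"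
    using b card_pos by (simp add: w_def G_def ln_powr ln_mult)
  moreover have "G * (b - b * b) \<le> G * ln (1 + b)"
    using b G ln_one_plus_pos_lower_bound[of b] by (intro mult_left_mono) (auto simp: power2_eq_square)
  moreover have "G * (b * b) \<le> T * (b * b)"
    using G by (intro mult_right_mono) auto
  ultimately have "b * G \<le> ln (card X) + b * E + b * (b * T)"
    by (simp add: algebra_simps)
  also have "\<dots> = b * (ln (card X) / b + E + b * T)"
    using b by (simp add: algebra_simps)
  finally have "G \<le> ln (card X) / b + E + b * T"
    using b by simp
  thus ?thesis
    unfolding G_def E_def by simp
qed

lemma valid_menu_outside:
  assumes "valid_menu ud m l H M" "l \<le> j"
  shows "snd M j = 0" "fst M j i = 0"
  using assms unfolding valid_menu_def by auto

lemma revenue_eq_price_of_best_entry: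
  assumes V: "valid_menu ud m l H M"
  obtains j where "j \<le> l" "revenue m l v M = snd M j"
    "\<And>j'. j' \<le> l \<Longrightarrow> entry_util m v M j' \<le> entry_util m v M j"
proof -
  define u where "u = entry_util m v M"
  define best where "best = Max (insert 0 (u ` {..<l}))"
  define C where "C = {j \<in> {..<l}. u j = best}"
  have rev: "revenue m l v M = (if C = {} then 0 else Max (snd M ` C))"
    unfolding revenue_def Let_def C_def best_def u_def by simp
  have le_best: "u j \<le> best" if "j < l" for j
    unfolding best_def using that by (intro Max_ge) auto
  have best_nonneg: "0 \<le> best"
    unfolding best_def by (intro Max_ge) auto
  have best_in: "best \<in> insert 0 (u ` {..<l})"
    unfolding best_def by (intro Max_in) auto
  \<comment> \<open>entry l stands for the null entry (0,0)\<close>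
  have null: "u l = 0" "snd M l = 0"
    using valid_menu_outside[OF V] unfolding u_def entry_util_def by simp_all
  show ?thesis
  proof (cases "C = {}")
    case True
    hence "best = 0"
      using best_in unfolding C_def by auto
    hence "u j' \<le> u l" if "j' \<le> l" for j'
      using that le_best null by (cases "j' = l") auto
    thus ?thesis
      using that[of l] True rev null unfolding u_def by simp
  next
    case False
    have "Max (snd M ` C) \<in> snd M ` C"
      using False unfolding C_def by (intro Max_in) auto
    then obtain j where j: "j \<in> C" "Max (snd M ` C) = snd M j"
      by auto
    have "u j' \<le> u j" if "j' \<le> l" for j'
      using that le_best best_nonneg null j(1) unfolding C_def by (cases "j' = l") auto
    moreover have "j \<le> l"
      using j(1) unfolding C_def by simp
    ultimately show ?thesis
      using that[of j] j(2) rev False unfolding u_def by simp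
  qed
qed

lemma revenue_bounds:
  assumes V: "valid_menu ud m l H M" and H: "0 \<le> H"
  shows "0 \<le> revenue m l v M" "revenue m l v M \<le> real m * H"
proof -
  obtain j where "j \<le> l" "revenue m l v M = snd M j"
    using revenue_eq_price_of_best_entry[OF V] by metis
  moreover have "0 \<le> snd M j \<and> snd M j \<le> real m * H" for j
    using V H unfolding valid_menu_def by (cases "j < l") auto
  ultimately show "0 \<le> revenue m l v M" "revenue m l v M \<le> real m * H"
    by auto
qed

text \<open>Discounting all prices by the factor 1 - \<delta> makes expensive entries relatively more attractive,
  so a buyer whose values for the entries drop by at most \<epsilon> can only switch to an entry that is at
  most (\<epsilon> + \<alpha>) / \<delta> cheaper.\<close>

lemma revenue_le_discounted_menu:
  fixes \<epsilon> \<delta> \<alpha> P :: real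
  assumes V: "valid_menu ud m l H M" and V': "valid_menu ud' m l H M'"
    and value_le: "\<And>j. j \<le> l \<Longrightarrow> (\<Sum>i<m. v i * fst M' j i) \<le> (\<Sum>i<m. v i * fst M j i)"
    and value_ge: "\<And>j. j \<le> l \<Longrightarrow> (\<Sum>i<m. v i * fst M j i) \<le> (\<Sum>i<m. v i * fst M' j i) + \<epsilon>"
    and price_le: "\<And>j. j \<le> l \<Longrightarrow> snd M' j \<le> (1 - \<delta>) * snd M j"
    and price_ge: "\<And>j. j \<le> l \<Longrightarrow> (1 - \<delta>) * snd M j - \<alpha> \<le> snd M' j"
    and price_bound: "\<And>j. j \<le> l \<Longrightarrow> snd M j \<le> P"
    and \<delta>: "0 < \<delta>"
  shows "revenue m l v M \<le> revenue m l v M' + (\<epsilon> + \<alpha>) / \<delta> + \<delta> * P + \<alpha>"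
proof -
  obtain a where a: "a \<le> l" "revenue m l v M = snd M a"
    and best_a: "\<And>j. j \<le> l \<Longrightarrow> entry_util m v M j \<le> entry_util m v M a"
    using revenue_eq_price_of_best_entry[OF V] by metis
  obtain b where b: "b \<le> l" "revenue m l v M' = snd M' b"
    and best_b: "\<And>j. j \<le> l \<Longrightarrow> entry_util m v M' j \<le> entry_util m v M' b"
    using revenue_eq_price_of_best_entry[OF V'] by metis
  have "\<delta> * snd M a \<le> \<delta> * snd M b + (\<epsilon> + \<alpha>)"
    using best_a[OF b(1)] best_b[OF a(1)] value_le[OF b(1)] value_ge[OF a(1)]
      price_le[OF a(1)] price_ge[OF b(1)]
    unfolding entry_util_def by (simp add: algebra_simps)
  hence "snd M a \<le> snd M b + (\<epsilon> + \<alpha>) / \<delta>"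
    using \<delta> by (simp add: field_simps)
  moreover have "\<delta> * snd M b \<le> \<delta> * P"
    using price_bound[OF b(1)] \<delta> by simp
  ultimately show ?thesis
    using a(2) b(2) price_ge[OF b(1)] by (simp add: algebra_simps)
qed

lemma alloc_grid_round_down:
  fixes \<phi> \<alpha> H :: real
  assumes \<alpha>: "0 < \<alpha>" "\<alpha> \<le> 1" and Hm: "0 < H * real m" and \<phi>: "0 \<le> \<phi>" "\<phi> \<le> 1"
  shows "\<exists>\<phi>'\<in>alloc_grid m H \<alpha>. 0 \<le> \<phi>' \<and> \<phi>' \<le> \<phi> \<and> \<phi> - \<phi>' \<le> \<alpha> + \<alpha> / (H * real m)"
proof (cases "\<phi> \<le> \<alpha> + \<alpha> / (H * real m)")
  case True
  thus ?thesis
    using \<phi> by (intro bexI[of _ 0]) (auto simp: alloc_grid_def)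
next
  case False
  define c where "c = \<alpha> / (H * real m)"
  have "0 < c"
    unfolding c_def using \<alpha> Hm by simp
  hence "0 < \<phi>"
    using False \<alpha> unfolding c_def by linarith
  hence "\<exists>s. (1 - \<alpha>) ^ s \<le> \<phi>"
    using real_arch_pow_inv[of \<phi> "1 - \<alpha>"] \<alpha> by (auto intro: less_imp_le)
  \<comment> \<open>the largest grid power not above \<phi> is within a factor (1 - \<alpha>) of \<phi>\<close>
  define s where "s = (LEAST s. (1 - \<alpha>) ^ s \<le> \<phi>)"
  have below: "(1 - \<alpha>) ^ s \<le> \<phi>"
    unfolding s_def by (rule LeastI_ex) fact
  have above: "\<phi> * (1 - \<alpha>) \<le> (1 - \<alpha>) ^ s"
  proof (cases s)
    case 0
    thus ?thesis using \<phi> \<alpha> by (simp add: mult_le_one)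
  next
    case (Suc k)
    have "\<not> (1 - \<alpha>) ^ k \<le> \<phi>"
      using not_less_Least[of k "\<lambda>s. (1 - \<alpha>) ^ s \<le> \<phi>"] Suc unfolding s_def by simp
    hence "\<phi> * (1 - \<alpha>) \<le> (1 - \<alpha>) ^ k * (1 - \<alpha>)"
      using \<alpha> by (intro mult_right_mono) auto
    thus ?thesis
      using Suc by (simp add: mult.commute)
  qed
  have "\<phi> * \<alpha> \<le> \<alpha>"
    using \<phi> \<alpha> by (simp add: mult_left_le_one_le)
  hence "c \<le> (1 - \<alpha>) ^ s" and err: "\<phi> - (1 - \<alpha>) ^ s \<le> \<alpha>"
    using above False unfolding c_def by (simp_all add: algebra_simps)
  hence "(1 - \<alpha>) ^ s \<in> alloc_grid m H \<alpha>"
    unfolding alloc_grid_def c_def by auto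
  thus ?thesis
    using below err \<alpha> \<open>0 < c\<close> unfolding c_def by (intro bexI[of _ "(1 - \<alpha>) ^ s"]) auto
qed

lemma price_grid_round_down:
  fixes x \<alpha> H :: real
  assumes \<alpha>: "0 < \<alpha>" and x: "0 \<le> x" "x \<le> real m * H"
  shows "\<exists>p\<in>price_grid m H \<alpha>. p \<le> x \<and> x - \<alpha> \<le> p"
proof -
  define k where "k = nat \<lfloor>x / \<alpha>\<rfloor>"
  have "real k = of_int \<lfloor>x / \<alpha>\<rfloor>"
    unfolding k_def using x \<alpha> by simp
  hence "real k \<le> x / \<alpha>" "x / \<alpha> - 1 \<le> real k"
    by linarith+
  hence "real k * \<alpha> \<le> x" "x - \<alpha> \<le> real k * \<alpha>"
    using \<alpha> by (simp_all add: field_simps)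
  thus ?thesis
    using x unfolding price_grid_def by (intro bexI[of _ "real k * \<alpha>"]) auto
qed

lemma card_alloc_grid_le:
  fixes \<alpha> H :: real
  assumes \<alpha>: "0 < \<alpha>" "\<alpha> \<le> 1" and Hm: "0 < H * real m"
  shows "finite (alloc_grid m H \<alpha>)" "real (card (alloc_grid m H \<alpha>)) \<le> H * real m / \<alpha>\<^sup>2 + 2"
proof -
  define c where "c = \<alpha> / (H * real m)"
  define N where "N = nat \<lfloor>H * real m / \<alpha>\<^sup>2\<rfloor>"
  have c: "0 < c"
    unfolding c_def using \<alpha> Hm by simp
  have exponent_le: "s \<le> N" if s: "c \<le> (1 - \<alpha>) ^ s" for s
  proof -
    have "(1 - \<alpha>) ^ s \<le> exp (- \<alpha>) ^ s"
      using \<alpha> exp_ge_add_one_self[of "- \<alpha>"] by (intro power_mono) auto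
    also have "\<dots> = exp (- (\<alpha> * real s))"
      by (simp add: exp_of_nat_mult[symmetric] mult.commute)
    finally have "ln c \<le> ln (exp (- (\<alpha> * real s)))"
      using s c by (subst ln_le_cancel_iff) auto
    hence "ln c \<le> - (\<alpha> * real s)"
      by simp
    hence "\<alpha> * real s \<le> ln (1 / c)"
      using c by (simp add: ln_div)
    also have "\<dots> \<le> 1 / c"
      using c ln_le_minus_one[of "1 / c"] by simp
    finally have "real s \<le> H * real m / \<alpha>\<^sup>2"
      using \<alpha> Hm unfolding c_def by (simp add: field_simps power2_eq_square)
    thus "s \<le> N"
      unfolding N_def by linarith
  qed
  have sub: "alloc_grid m H \<alpha> \<subseteq> insert 0 ((\<lambda>s. (1 - \<alpha>) ^ s) ` {..N})"
    unfolding alloc_grid_def using exponent_le c_def by auto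
  thus "finite (alloc_grid m H \<alpha>)"
    using finite_subset by blast
  have "card (alloc_grid m H \<alpha>) \<le> card (insert 0 ((\<lambda>s. (1 - \<alpha>) ^ s) ` {..N}))"
    using sub by (intro card_mono) auto
  also have "\<dots> \<le> Suc (card ((\<lambda>s. (1 - \<alpha>) ^ s) ` {..N}))"
    by (rule card_insert_le_m1) auto
  also have "\<dots> \<le> Suc (card {..N})"
    using card_image_le[of "{..N}" "\<lambda>s. (1 - \<alpha>) ^ s"] by simp
  finally have "real (card (alloc_grid m H \<alpha>)) \<le> real N + 2"
    by simp
  moreover have "real N \<le> H * real m / \<alpha>\<^sup>2"
    unfolding N_def using Hm \<alpha> by simp
  ultimately show "real (card (alloc_grid m H \<alpha>)) \<le> H * real m / \<alpha>\<^sup>2 + 2"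
    by linarith
qed

lemma card_price_grid_le:
  fixes \<alpha> H :: real
  assumes \<alpha>: "0 < \<alpha>" and mH: "0 \<le> real m * H"
  shows "finite (price_grid m H \<alpha>)" "real (card (price_grid m H \<alpha>)) \<le> real m * H / \<alpha> + 1"
proof -
  define N where "N = nat \<lfloor>real m * H / \<alpha>\<rfloor>"
  have "price_grid m H \<alpha> \<subseteq> (\<lambda>k. real k * \<alpha>) ` {..N}"
  proof
    fix x assume "x \<in> price_grid m H \<alpha>"
    then obtain k where k: "x = real k * \<alpha>" "real k * \<alpha> \<le> real m * H"
      unfolding price_grid_def by auto
    have "real k \<le> real m * H / \<alpha>"
      using k(2) \<alpha> by (simp add: field_simps)
    hence "k \<le> N"
      unfolding N_def by linarith
    thus "x \<in> (\<lambda>k. real k * \<alpha>) ` {..N}"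
      using k by auto
  qed
  note sub = this
  thus "finite (price_grid m H \<alpha>)"
    using finite_subset by blast
  have "card (price_grid m H \<alpha>) \<le> card ((\<lambda>k. real k * \<alpha>) ` {..N})"
    using sub by (intro card_mono) auto
  also have "\<dots> \<le> Suc N"
    using card_image_le[of "{..N}" "\<lambda>k. real k * \<alpha>"] by simp
  finally have "real (card (price_grid m H \<alpha>)) \<le> real N + 1"
    by simp
  moreover have "real N \<le> real m * H / \<alpha>"
    unfolding N_def using mH \<alpha> by simp
  ultimately show "real (card (price_grid m H \<alpha>)) \<le> real m * H / \<alpha> + 1"
    by linarith
qed

lemma card_disc_menus_le:
  assumes fA: "finite (alloc_grid m H \<alpha>)" and fP: "finite (price_grid m H \<alpha>)"
  shows "finite (disc_menus ud m l H \<alpha>)"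
    "card (disc_menus ud m l H \<alpha>) \<le> card (alloc_grid m H \<alpha>) ^ (l * m) * card (price_grid m H \<alpha>) ^ l"
proof -
  define A where "A = alloc_grid m H \<alpha>"
  define P where "P = price_grid m H \<alpha>"
  define S where "S = (PiE ({..<l} \<times> {..<m}) (\<lambda>_. A)) \<times> (PiE {..<l} (\<lambda>_. P))"
  define menu_of :: "((nat \<times> nat \<Rightarrow> real) \<times> (nat \<Rightarrow> real)) \<Rightarrow> menu"
    where "menu_of = (\<lambda>(f, p). ((\<lambda>j i. if j < l \<and> i < m then f (j, i) else 0),
                                 (\<lambda>j. if j < l then p j else 0)))"
  have sub: "disc_menus ud m l H \<alpha> \<subseteq> menu_of ` S"
  proof
    fix M assume M: "M \<in> disc_menus ud m l H \<alpha>"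
    hence V: "valid_menu ud m l H M"
      unfolding disc_menus_def by auto
    define f where "f = restrict (\<lambda>(j, i). fst M j i) ({..<l} \<times> {..<m})"
    define p where "p = restrict (snd M) {..<l}"
    have "(f, p) \<in> S"
      using M unfolding S_def f_def p_def disc_menus_def A_def P_def by auto
    moreover have "menu_of (f, p) = M"
      using V unfolding menu_of_def f_def p_def valid_menu_def by (auto intro!: ext simp: prod_eq_iff)
    ultimately show "M \<in> menu_of ` S"
      by (metis image_eqI)
  qed
  have fS: "finite S"
    unfolding S_def using fA fP A_def P_def by (auto intro!: finite_PiE)
  thus "finite (disc_menus ud m l H \<alpha>)"
    using sub finite_subset by blast
  have "card (disc_menus ud m l H \<alpha>) \<le> card (menu_of ` S)"
    using sub fS by (intro card_mono) auto
  also have "\<dots> \<le> card S"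
    using fS by (rule card_image_le)
  also have "card S = card A ^ (l * m) * card P ^ l"
    unfolding S_def by (simp add: card_cartesian_product card_PiE)
  finally show "card (disc_menus ud m l H \<alpha>) \<le> card (alloc_grid m H \<alpha>) ^ (l * m) * card (price_grid m H \<alpha>) ^ l"
    unfolding A_def P_def .
qed

lemma disc_menu_below:
  fixes \<alpha> \<delta> H :: real
  assumes V: "valid_menu ud m l H M" and \<alpha>: "0 < \<alpha>" "\<alpha> \<le> 1" and \<delta>: "0 \<le> \<delta>" "\<delta> \<le> 1"
    and Hm: "0 < H * real m"
  obtains M' where "M' \<in> disc_menus ud m l H \<alpha>"
    "\<And>j i. 0 \<le> fst M j i - fst M' j i" "\<And>j i. fst M j i - fst M' j i \<le> \<alpha> + \<alpha> / (H * real m)"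
    "\<And>j. snd M' j \<le> (1 - \<delta>) * snd M j" "\<And>j. (1 - \<delta>) * snd M j - \<alpha> \<le> snd M' j"
proof -
  have \<phi>: "0 \<le> fst M j i \<and> fst M j i \<le> 1" for j i
    using V unfolding valid_menu_def by (cases "j < l \<and> i < m") auto
  have p: "0 \<le> snd M j \<and> snd M j \<le> real m * H" for j
    using V Hm unfolding valid_menu_def by (cases "j < l") (auto simp: mult.commute)
  have "\<forall>x\<in>{0..1}. \<exists>\<phi>'\<in>alloc_grid m H \<alpha>. 0 \<le> \<phi>' \<and> \<phi>' \<le> x \<and> x - \<phi>' \<le> \<alpha> + \<alpha> / (H * real m)"
    using alloc_grid_round_down[OF \<alpha> Hm] by auto
  then obtain r where r: "\<And>x. x \<in> {0..1} \<Longrightarrow>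
      r x \<in> alloc_grid m H \<alpha> \<and> 0 \<le> r x \<and> r x \<le> x \<and> x - r x \<le> \<alpha> + \<alpha> / (H * real m)"
    by metis
  have "(1 - \<delta>) * snd M j \<le> real m * H" for j
    using p[of j] \<delta> mult_left_le_one_le[of "snd M j" "1 - \<delta>"] by auto
  hence "\<forall>j. \<exists>q\<in>price_grid m H \<alpha>. q \<le> (1 - \<delta>) * snd M j \<and> (1 - \<delta>) * snd M j - \<alpha> \<le> q"
    using price_grid_round_down[OF \<alpha>(1)] p \<delta> by simp
  then obtain q where q: "\<And>j. q j \<in> price_grid m H \<alpha> \<and> q j \<le> (1 - \<delta>) * snd M j
      \<and> (1 - \<delta>) * snd M j - \<alpha> \<le> q j"
    by metis
  define M' :: menu where
    "M' = ((\<lambda>j i. if j < l \<and> i < m then r (fst M j i) else 0), (\<lambda>j. if j < l then q j else 0))"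
  have q_nonneg: "0 \<le> q j" and q_le: "q j \<le> real m * H" for j
    using q[of j] unfolding price_grid_def by auto
  have outside: "fst M j i = 0" if "\<not> (j < l \<and> i < m)" for j i
    using V that unfolding valid_menu_def by auto
  have alloc_le: "fst M' j i \<le> fst M j i" for j i
    using r \<phi> outside unfolding M'_def by auto
  have alloc_le_one: "r (fst M j i) \<le> 1" for j i
    using r[of "fst M j i"] \<phi>[of j i] by auto
  have "valid_menu ud m l H M'"
    unfolding valid_menu_def
  proof (intro conjI allI impI)
    fix j assume "ud" "j < l"
    have "(\<Sum>i<m. fst M' j i) \<le> (\<Sum>i<m. fst M j i)"
      using alloc_le by (rule sum_mono)
    also have "\<dots> \<le> 1"
      using V \<open>ud\<close> \<open>j < l\<close> unfolding valid_menu_def by auto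
    finally show "(\<Sum>i<m. fst M' j i) \<le> 1" .
  qed (use r \<phi> q_nonneg q_le alloc_le_one in \<open>auto simp: M'_def\<close>)
  moreover have "M' \<in> disc_menus ud m l H \<alpha>" if "valid_menu ud m l H M'"
    using that r \<phi> q unfolding disc_menus_def M'_def by auto
  moreover have "0 \<le> \<alpha> + \<alpha> / (H * real m)"
    using \<alpha> Hm by simp
  ultimately show ?thesis
    using that r \<phi> q outside valid_menu_outside[OF V] \<alpha> unfolding M'_def by auto
qed

lemma sum_mult_le_sum_mult_add:
  fixes v x y :: "nat \<Rightarrow> real"
  assumes v: "\<And>i. i < m \<Longrightarrow> 0 \<le> v i \<and> v i \<le> H"
    and xy: "\<And>i. i < m \<Longrightarrow> 0 \<le> x i - y i \<and> x i - y i \<le> d"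
  shows "(\<Sum>i<m. v i * y i) \<le> (\<Sum>i<m. v i * x i)"
    "(\<Sum>i<m. v i * x i) \<le> (\<Sum>i<m. v i * y i) + real m * H * d"
proof -
  show "(\<Sum>i<m. v i * y i) \<le> (\<Sum>i<m. v i * x i)"
    using v xy by (intro sum_mono mult_left_mono) auto
  have "v i * (x i - y i) \<le> H * d" if "i < m" for i
    using v[OF that] xy[OF that] by (intro mult_mono) auto
  hence "(\<Sum>i<m. v i * x i) \<le> (\<Sum>i<m. v i * y i + H * d)"
    by (intro sum_mono) (simp add: algebra_simps)
  thus "(\<Sum>i<m. v i * x i) \<le> (\<Sum>i<m. v i * y i) + real m * H * d"
    by (simp add: sum.distrib)
qed

lemma disc_menus_approx_revenue:
  assumes V: "valid_menu ud m l H M" and m: "m \<ge> 1" and H: "H \<ge> 1" and T: "T \<ge> 1"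
  obtains M' where "M' \<in> disc_menus ud m l H (1 / real T)"
    "\<And>v. (\<forall>i<m. 0 \<le> v i \<and> v i \<le> H) \<Longrightarrow>
       revenue m l v M \<le> revenue m l v M' + 5 * real m * H / sqrt (real T)"
proof -
  define s where "s = sqrt (real T)"
  define \<alpha> where "\<alpha> = 1 / real T"
  define \<delta> where "\<delta> = 1 / s"
  have s: "1 \<le> s" and T_eq: "real T = s\<^sup>2"
    unfolding s_def using T by simp_all
  have mH: "1 \<le> real m * H"
    using m H by (intro mult_ge1_I) auto
  have Hm: "0 < H * real m"
    using mH by (simp add: mult.commute)
  obtain M' where M': "M' \<in> disc_menus ud m l H \<alpha>"
    and alloc: "\<And>j i. 0 \<le> fst M j i - fst M' j i" "\<And>j i. fst M j i - fst M' j i \<le> \<alpha> + \<alpha> / (H * real m)"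
    and price: "\<And>j. snd M' j \<le> (1 - \<delta>) * snd M j" "\<And>j. (1 - \<delta>) * snd M j - \<alpha> \<le> snd M' j"
    using disc_menu_below[OF V _ _ _ _ Hm, of \<alpha> \<delta>] s T unfolding \<alpha>_def \<delta>_def by auto
  have V': "valid_menu ud m l H M'"
    using M' unfolding disc_menus_def by auto
  have "revenue m l v M \<le> revenue m l v M' + 5 * real m * H / s"
    if v: "\<forall>i<m. 0 \<le> v i \<and> v i \<le> H" for v
  proof -
    define \<epsilon> where "\<epsilon> = real m * H * (\<alpha> + \<alpha> / (H * real m))"
    have value_le: "(\<Sum>i<m. v i * fst M' j i) \<le> (\<Sum>i<m. v i * fst M j i)"
      and value_ge: "(\<Sum>i<m. v i * fst M j i) \<le> (\<Sum>i<m. v i * fst M' j i) + \<epsilon>" for j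
      using sum_mult_le_sum_mult_add[of m v H "fst M j" "fst M' j" "\<alpha> + \<alpha> / (H * real m)"] v alloc
      unfolding \<epsilon>_def by auto
    have price_bound: "snd M j \<le> real m * H" for j
      using V H unfolding valid_menu_def by (cases "j < l") auto
    have rev_le: "revenue m l v M \<le> revenue m l v M' + (\<epsilon> + \<alpha>) / \<delta> + \<delta> * (real m * H) + \<alpha>"
      using s unfolding \<delta>_def[symmetric]
      by (intro revenue_le_discounted_menu[OF V V'] value_le value_ge price price_bound)
        (auto simp: \<delta>_def)
    have "(\<epsilon> + \<alpha>) / \<delta> + \<delta> * (real m * H) + \<alpha> = (2 * (real m * H) + 2) / s + 1 / s\<^sup>2"
      using s m H unfolding \<epsilon>_def \<alpha>_def \<delta>_def T_eq by (simp add: field_simps power2_eq_square)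
    also have "\<dots> \<le> (2 * (real m * H) + 2) / s + 1 / s"
      using s by (simp add: field_simps power2_eq_square)
    also have "\<dots> = (2 * (real m * H) + 3) / s"
      by (simp add: add_divide_distrib)
    also have "\<dots> \<le> 5 * real m * H / s"
      using mH s by (intro divide_right_mono) (auto simp: mult.commute)
    finally show ?thesis
      using rev_le by linarith
  qed
  thus ?thesis
    using that M' unfolding \<alpha>_def s_def by blast
qed

lemma ln_card_disc_menus_le:
  assumes m: "m \<ge> 1" and l: "l \<ge> 1" and H: "H \<ge> 1" and T: "T \<ge> 1"
  shows "finite (disc_menus ud m l H (1 / real T))"
    "ln (card (disc_menus ud m l H (1 / real T)))
       \<le> 4 * real m * real l * (1 + ln (real m * H * real l * real T))"
proof -
  define \<alpha> where "\<alpha> = 1 / real T"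
  define x where "x = real m * H * real l * real T"
  have m1: "1 \<le> real m" and l1: "1 \<le> real l" and T1: "1 \<le> real T"
    using m l T by simp_all
  have mH: "1 \<le> real m * H" and mHl: "1 \<le> real m * H * real l" and x: "1 \<le> x"
    unfolding x_def using m1 l1 H T1 by (auto intro!: mult_ge1_I)
  have \<alpha>: "0 < \<alpha>" "\<alpha> \<le> 1"
    unfolding \<alpha>_def using T1 by simp_all
  have Hm: "0 < H * real m"
    using mH by (simp add: mult.commute)
  note A = card_alloc_grid_le[OF \<alpha> Hm] and P = card_price_grid_le[OF \<alpha>(1), of m H]
  have mHT: "real m * H * real T \<le> x"
    using mult_left_mono[OF l1, of "real m * H * real T"] H T1 unfolding x_def
    by (simp add: algebra_simps zero_le_mult_iff)
  have T_le: "real T \<le> x"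
    using mult_right_mono[OF mHl, of "real T"] T1 unfolding x_def by simp
  have x_sq: "x \<le> x\<^sup>2" "1 \<le> x\<^sup>2"
    using x mult_left_mono[OF x, of x] one_le_power[OF x, of 2] by (simp_all add: power2_eq_square)
  have card_A: "real (card (alloc_grid m H \<alpha>)) \<le> 3 * x\<^sup>2"
  proof -
    have "H * real m / \<alpha>\<^sup>2 = (real m * H * real T) * real T"
      unfolding \<alpha>_def by (simp add: power2_eq_square)
    also have "\<dots> \<le> x\<^sup>2"
      unfolding power2_eq_square using mHT T_le mH T1 by (intro mult_mono) auto
    finally show ?thesis
      using A(2) x_sq by linarith
  qed
  have card_P: "real (card (price_grid m H \<alpha>)) \<le> 3 * x\<^sup>2"
  proof -
    have "real m * H / \<alpha> = real m * H * real T"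
      unfolding \<alpha>_def by simp
    thus ?thesis
      using P(2) mH mHT x_sq by linarith
  qed
  have fin: "finite (disc_menus ud m l H \<alpha>)"
    and card: "card (disc_menus ud m l H \<alpha>) \<le> card (alloc_grid m H \<alpha>) ^ (l * m) * card (price_grid m H \<alpha>) ^ l"
    using card_disc_menus_le[OF A(1) P(1)] mH by auto
  have "real (card (disc_menus ud m l H \<alpha>))
          \<le> real (card (alloc_grid m H \<alpha>)) ^ (l * m) * real (card (price_grid m H \<alpha>)) ^ l"
    using card by (metis of_nat_le_iff of_nat_mult of_nat_power)
  also have "\<dots> \<le> (3 * x\<^sup>2) ^ (l * m) * (3 * x\<^sup>2) ^ l"
    using card_A card_P by (intro mult_mono power_mono) auto
  also have "\<dots> = (3 * x\<^sup>2) ^ (l * m + l)"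
    by (simp add: power_add)
  finally have card_le: "real (card (disc_menus ud m l H \<alpha>)) \<le> (3 * x\<^sup>2) ^ (l * m + l)" .
  have ln3: "ln (3 * x\<^sup>2) \<le> 2 * (1 + ln x)"
    using x ln_le_minus_one[of 3] by (simp add: ln_mult ln_realpow)
  have "ln (card (disc_menus ud m l H \<alpha>)) \<le> ln ((3 * x\<^sup>2) ^ (l * m + l))"
  proof (cases "card (disc_menus ud m l H \<alpha>) = 0")
    case True
    have "1 \<le> (3 * x\<^sup>2) ^ (l * m + l)"
      using x_sq by (intro one_le_power) simp
    thus ?thesis
      using True by simp
  qed (use card_le in simp)
  also have "\<dots> = real (l * m + l) * ln (3 * x\<^sup>2)"
    using x by (intro ln_realpow)
  also have "\<dots> \<le> (2 * real m * real l) * (2 * (1 + ln x))"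
    using ln3 x x_sq m1 l1 by (intro mult_mono) (auto simp: algebra_simps)
  also have "\<dots> = 4 * real m * real l * (1 + ln x)"
    by simp
  finally show "ln (card (disc_menus ud m l H (1 / real T)))
       \<le> 4 * real m * real l * (1 + ln (real m * H * real l * real T))"
    unfolding \<alpha>_def x_def by simp
  show "finite (disc_menus ud m l H (1 / real T))"
    using fin unfolding \<alpha>_def .
qed

lemma wm_expected_revenue_ge:
  assumes fin: "finite X" and M0: "M0 \<in> X" and X: "X \<subseteq> {M. valid_menu ud m l H M}"
    and mH: "0 < real m * H" and \<beta>: "0 < \<beta>" "\<beta> \<le> 1"
  shows "(\<Sum>t<T. revenue m l (vs t) M0)
           \<le> wm_expected_revenue X m l H \<beta> vs T + real m * H * (\<beta> * T + ln (card X) / \<beta>)"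
proof -
  define g where "g t M = revenue m l (vs t) M / (real m * H)" for t M
  have H: "0 \<le> H"
    using mH by (simp add: zero_less_mult_iff)
  have g: "0 \<le> g t M \<and> g t M \<le> 1" if "M \<in> X" for t M
    using revenue_bounds[of ud m l H M "vs t"] X that H mH unfolding g_def by auto
  have prob: "wm_prob X m l H \<beta> vs t M
        = (1 + \<beta>) powr (\<Sum>s<t. g s M) / (\<Sum>M'\<in>X. (1 + \<beta>) powr (\<Sum>s<t. g s M'))" for t M
    unfolding wm_prob_def wm_weight_def cum_rev_def g_def by (simp add: sum_divide_distrib)
  have expected: "wm_expected_revenue X m l H \<beta> vs T = real m * H *
      (\<Sum>t<T. \<Sum>M\<in>X. (1 + \<beta>) powr (\<Sum>s<t. g s M) / (\<Sum>M'\<in>X. (1 + \<beta>) powr (\<Sum>s<t. g s M')) * g t M)"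
  proof -
    have "p * revenue m l (vs t) M = real m * H * (p * g t M)" for p t M
      unfolding g_def using mH by (simp add: zero_less_mult_iff)
    thus ?thesis
      unfolding wm_expected_revenue_def prob sum_distrib_left by presburger
  qed
  have "(\<Sum>t<T. revenue m l (vs t) M0) = real m * H * (\<Sum>t<T. g t M0)"
    using mH unfolding g_def sum_distrib_left by (simp add: zero_less_mult_iff)
  also have "\<dots> \<le> real m * H * ((\<Sum>t<T. \<Sum>M\<in>X. (1 + \<beta>) powr (\<Sum>s<t. g s M)
                  / (\<Sum>M'\<in>X. (1 + \<beta>) powr (\<Sum>s<t. g s M')) * g t M) + \<beta> * T + ln (card X) / \<beta>)"
    using mH weighted_majority_regret[OF fin M0 _ \<beta>, of T g] g by (intro mult_left_mono) auto
  finally show ?thesis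
    unfolding expected by (simp add: algebra_simps)
qed

lemma wm_regret_le:
  assumes m: "m \<ge> 1" and H: "H \<ge> 1" and T: "T \<ge> 1"
    and vs: "\<forall>t<T. \<forall>i<m. 0 \<le> vs t i \<and> vs t i \<le> H"
    and fin: "finite (disc_menus ud m l H (1 / real T))"
  shows "wm_regret ud m l H vs T
           \<le> real m * H * sqrt (real T) * (6 + ln (card (disc_menus ud m l H (1 / real T))))"
proof -
  define X where "X = disc_menus ud m l H (1 / real T)"
  define \<beta> where "\<beta> = 1 / sqrt (real T)"
  define s where "s = sqrt (real T)"
  define B where "B = wm_expected_revenue X m l H \<beta> vs T
                      + real m * H * (\<beta> * T + ln (card X) / \<beta>) + real T * (5 * real m * H / s)"
  have s: "1 \<le> s" "real T = s * s"
    unfolding s_def using T by simp_all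
  have mH: "0 < real m * H"
    using m H by simp
  have \<beta>: "0 < \<beta>" "\<beta> \<le> 1"
    unfolding \<beta>_def using T by simp_all
  have X_valid: "X \<subseteq> {M. valid_menu ud m l H M}"
    unfolding X_def disc_menus_def by auto
  have "(\<Sum>t<T. revenue m l (vs t) M) \<le> B" if V: "valid_menu ud m l H M" for M
  proof -
    obtain M' where M': "M' \<in> X" and approx: "\<And>v. (\<forall>i<m. 0 \<le> v i \<and> v i \<le> H) \<Longrightarrow>
        revenue m l v M \<le> revenue m l v M' + 5 * real m * H / s"
      using disc_menus_approx_revenue[OF V m H T] unfolding X_def s_def by metis
    have "(\<Sum>t<T. revenue m l (vs t) M) \<le> (\<Sum>t<T. revenue m l (vs t) M' + 5 * real m * H / s)"
      using approx vs by (intro sum_mono) auto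
    also have "\<dots> = (\<Sum>t<T. revenue m l (vs t) M') + real T * (5 * real m * H / s)"
      by (simp add: sum.distrib)
    also have "\<dots> \<le> B"
      unfolding B_def using wm_expected_revenue_ge[OF fin[folded X_def] M' X_valid mH \<beta>] by simp
    finally show ?thesis .
  qed
  moreover have "valid_menu ud m l H (\<lambda>_ _. 0, \<lambda>_. 0)"
    using mH by (simp add: valid_menu_def)
  ultimately have "opt_revenue ud m l H vs T \<le> B"
    unfolding opt_revenue_def by (intro cSUP_least) auto
  moreover have "real m * H * (\<beta> * T + ln (card X) / \<beta>) + real T * (5 * real m * H / s)
                 = real m * H * s * (6 + ln (card X))"
    using s unfolding \<beta>_def s_def[symmetric] by (simp add: field_simps)
  ultimately show ?thesis
    unfolding wm_regret_def Let_def B_def X_def \<beta>_def s_def by simp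
qed

theorem mainTheorem15:
  "\<exists>C (k::nat). \<forall>(ud::bool) (m::nat) (l::nat) (H::real) (T::nat) (vs::nat \<Rightarrow> nat \<Rightarrow> real).
     m \<ge> 1 \<longrightarrow> l \<ge> 1 \<longrightarrow> H \<ge> 1 \<longrightarrow> T \<ge> 1 \<longrightarrow>
     (\<forall>t<T. \<forall>i<m. 0 \<le> vs t i \<and> vs t i \<le> H) \<longrightarrow>
     wm_regret ud m l H vs T
       \<le> C * real m ^ 2 * H * real l * sqrt (real T)
           * (1 + ln (real m * H * real l * real T)) ^ k"
proof (intro exI allI impI)
  fix ud :: bool and m l :: nat and H :: real and T :: nat and vs :: "nat \<Rightarrow> nat \<Rightarrow> real"
  assume m: "m \<ge> 1" and l: "l \<ge> 1" and H: "H \<ge> 1" and T: "T \<ge> 1"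
    and vs: "\<forall>t<T. \<forall>i<m. 0 \<le> vs t i \<and> vs t i \<le> H"
  define L where "L = 1 + ln (real m * H * real l * real T)"
  note card = ln_card_disc_menus_le[OF m l H T, of ud, folded L_def]
  have "1 \<le> real m * H * real l * real T"
    using m l H T by (intro mult_ge1_I) auto
  hence L: "1 \<le> L"
    unfolding L_def by simp
  have ml: "1 \<le> real m * real l"
    using m l by (intro mult_ge1_I) auto
  have "6 \<le> 6 * (real m * real l * L)"
    using mult_ge1_I[OF ml L] by simp
  hence "6 + ln (card (disc_menus ud m l H (1 / real T))) \<le> 10 * (real m * real l * L)"
    using card(2) by (simp add: algebra_simps)
  hence "real m * H * sqrt (real T) * (6 + ln (card (disc_menus ud m l H (1 / real T))))
         \<le> real m * H * sqrt (real T) * (10 * (real m * real l * L))"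
    using H by (intro mult_left_mono) auto
  also have "\<dots> = 10 * real m ^ 2 * H * real l * sqrt (real T) * L ^ 1"
    by (simp add: power2_eq_square mult_ac)
  finally show "wm_regret ud m l H vs T \<le> 10 * real m ^ 2 * H * real l * sqrt (real T) * L ^ 1"
    using wm_regret_le[OF m H T vs card(1)] by (simp only: L_def)
qed

end
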